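(* None of the following infinite sequences is $q$-automatic for any integer $q\ge2$: (i) the fixed point beginning with $a$ of $a\to aca$, $b\to d$, $c\to aba$, $d\to c$; (ii) the fixed point beginning with $x$ of $x\to xzy$, $y\to xx$, $z\to yy$; (iii) the infinite fixed points of $\sigma^3$ (those beginning with $a$ and with $b$), where $\sigma$ is $a\to b$, $b\to c$, $c\to aba$; (iv) the three infinite fixed points of $\rho^3$ (beginning with $a$, $b$, $c$ respectively), where $\rho$ is $a\to c$, $b\to aba$, $c\to b$.
   Context: For an integer $q\ge 2$, a sequence is $q$-automatic if it is the image under a letter-to-letter map of a fixed point of a morphism all of whose letter-images have length $q$. *)

theory Defs
  imports Main
begin

definition pref :: "(nat \<Rightarrow> 'a) \<Rightarrow> nat \<Rightarrow> 'a list" where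
  "pref w n = map w [0..<n]"

definition morph_word :: "('a \<Rightarrow> 'a list) \<Rightarrow> 'a list \<Rightarrow> 'a list" where
  "morph_word \<sigma> xs = concat (map \<sigma> xs)"

fun morph_pow :: "('a \<Rightarrow> 'a list) \<Rightarrow> nat \<Rightarrow> 'a \<Rightarrow> 'a list" where
  "morph_pow \<sigma> 0 x = [x]"
| "morph_pow \<sigma> (Suc n) x = morph_word \<sigma> (morph_pow \<sigma> n x)"

text \<open>The infinite word w is a fixed point of \<sigma>: the image \<sigma>(w) (the concatenation
  of \<sigma>(w 0), \<sigma>(w 1), ...) is an infinite word and equals w.\<close>
definition is_fixed_point :: "('a \<Rightarrow> 'a list) \<Rightarrow> (nat \<Rightarrow> 'a) \<Rightarrow> bool" where
  "is_fixed_point \<sigma> w \<longleftrightarrow>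
     (\<forall>m. \<exists>n. m \<le> length (morph_word \<sigma> (pref w n))) \<and>
     (\<forall>n. morph_word \<sigma> (pref w n) = pref w (length (morph_word \<sigma> (pref w n))))"

text \<open>q-automatic: image under a letter-to-letter map \<tau> of a fixed point u of a
  q-uniform morphism \<phi> on a finite alphabet A (encoded as a finite set of naturals).\<close>
definition q_automatic :: "nat \<Rightarrow> (nat \<Rightarrow> 'a) \<Rightarrow> bool" where
  "q_automatic q s \<longleftrightarrow>
     (\<exists>(A :: nat set) (\<phi> :: nat \<Rightarrow> nat list) (u :: nat \<Rightarrow> nat) (\<tau> :: nat \<Rightarrow> 'a).
        finite A \<and>
        (\<forall>c\<in>A. length (\<phi> c) = q \<and> set (\<phi> c) \<subseteq> A) \<and>
        (\<forall>n. u n \<in> A) \<and>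
        is_fixed_point \<phi> u \<and>
        (\<forall>n. s n = \<tau> (u n)))"

datatype L4 = a | b | c | d
datatype L3 = x | y | z

fun \<sigma>1 :: "L4 \<Rightarrow> L4 list" where
  "\<sigma>1 a = [a, c, a]" | "\<sigma>1 b = [d]" | "\<sigma>1 c = [a, b, a]" | "\<sigma>1 d = [c]"

fun \<sigma>2 :: "L3 \<Rightarrow> L3 list" where
  "\<sigma>2 x = [x, z, y]" | "\<sigma>2 y = [x, x]" | "\<sigma>2 z = [y, y]"

text \<open>Letters a, b, c of L4 are used for the three-letter alphabets in (iii), (iv);
  the letter d does not occur (its image is irrelevant).\<close>
fun \<sigma>3 :: "L4 \<Rightarrow> L4 list" where
  "\<sigma>3 a = [b]" | "\<sigma>3 b = [c]" | "\<sigma>3 c = [a, b, a]" | "\<sigma>3 d = [d]"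

fun \<rho> :: "L4 \<Rightarrow> L4 list" where
  "\<rho> a = [c]" | "\<rho> b = [a, b, a]" | "\<rho> c = [b]" | "\<rho> d = [d]"

end

theory Submission
  imports Defs "HOL-Computational_Algebra.Polynomial"
begin

(* Cobham: if a letter has a frequency in a q-automatic sequence, that frequency is rational,
   since along the prefixes of length q^k the letter counts satisfy a linear recurrence with
   rational coefficients.  In a fixed point of a primitive morphism every letter has a frequency,
   the corresponding coordinate of the normalised left Perron eigenvector of the incidence matrix.
   For the four morphisms this coordinate is irrational: the Perron eigenvalue is an irrational
   root of a monic integer cubic or quartic, and a rational frequency would turn the eigenvalue
   into the root of a rational linear equation. *)

lemma sum_sum_list_swap: "(\<Sum>i\<in>I. \<Sum>g\<leftarrow>gs. f i g) = (\<Sum>g\<leftarrow>gs. \<Sum>i\<in>I. f i g)"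
  by (induction gs) (simp_all add: sum.distrib)

lemma sum_list_le_const_mult:
  fixes f l :: "'b \<Rightarrow> 'a::ordered_semiring_0"
  assumes "\<And>g. g \<in> set gs \<Longrightarrow> f g \<le> M * l g"
  shows "(\<Sum>g\<leftarrow>gs. f g) \<le> M * (\<Sum>g\<leftarrow>gs. l g)"
  using assms by (simp add: sum_list_const_mult[symmetric] sum_list_mono)

lemma sum_list_ge_const_mult:
  fixes f l :: "'b \<Rightarrow> 'a::ordered_semiring_0"
  assumes "\<And>g. g \<in> set gs \<Longrightarrow> M * l g \<le> f g"
  shows "M * (\<Sum>g\<leftarrow>gs. l g) \<le> (\<Sum>g\<leftarrow>gs. f g)"
  using assms by (simp add: sum_list_const_mult[symmetric] sum_list_mono)

lemma member_le_sum_list_nonneg: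
  fixes f :: "'b \<Rightarrow> 'a::ordered_comm_monoid_add"
  assumes "g \<in> set gs" and "\<And>g. g \<in> set gs \<Longrightarrow> 0 \<le> f g"
  shows "f g \<le> (\<Sum>g\<leftarrow>gs. f g)"
  using assms
proof (induction gs)
  case (Cons g' gs)
  have "0 \<le> (\<Sum>g\<leftarrow>gs. f g)"
    using Cons.prems(2) by (intro sum_list_nonneg) auto
  with Cons show ?case by (auto intro: add_increasing add_increasing2)
qed simp

section \<open>Morphisms and their fixed points\<close>

lemma morph_word_Nil [simp]: "morph_word f [] = []"
  by (simp add: morph_word_def)

lemma morph_word_Cons [simp]: "morph_word f (g # gs) = f g @ morph_word f gs"
  by (simp add: morph_word_def)

lemma morph_word_append [simp]:
  "morph_word \<sigma> (xs @ ys) = morph_word \<sigma> xs @ morph_word \<sigma> ys"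
  by (simp add: morph_word_def)

lemma morph_word_morph_word:
  "morph_word \<sigma> (morph_word \<tau> xs) = morph_word (morph_word \<sigma> \<circ> \<tau>) xs"
  by (induction xs) (simp_all add: morph_word_def)

lemma morph_pow_add:
  "morph_pow \<sigma> (k + j) t = morph_word (morph_pow \<sigma> k) (morph_pow \<sigma> j t)"
proof (induction k)
  case (Suc k)
  then show ?case by (simp add: morph_word_morph_word comp_def)
qed (simp add: morph_word_def)

lemma morph_pow_Suc_right: "morph_pow \<sigma> (Suc k) t = morph_word (morph_pow \<sigma> k) (\<sigma> t)"
  using morph_pow_add[of \<sigma> k 1 t] by (simp add: morph_word_def)

lemma length_morph_word: "length (morph_word f xs) = (\<Sum>g\<leftarrow>xs. length (f g))"
  by (induction xs) (simp_all add: morph_word_def)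

lemma set_morph_word: "set (morph_word f gs) = (\<Union>g\<in>set gs. set (f g))"
  by (simp add: morph_word_def)

lemma count_list_morph_word: "count_list (morph_word f xs) \<alpha> = (\<Sum>g\<leftarrow>xs. count_list (f g) \<alpha>)"
  by (induction xs) (simp_all add: morph_word_def)

lemma length_filter_morph_word:
  "length (filter P (morph_word f gs)) = (\<Sum>g\<leftarrow>gs. length (filter P (f g)))"
  by (induction gs) (simp_all add: morph_word_def)

lemma sum_list_morph_word: "(\<Sum>g\<leftarrow>morph_word f gs. F g) = (\<Sum>t\<leftarrow>gs. \<Sum>g\<leftarrow>f t. F g)"
  by (induction gs) simp_all

lemma morph_pow_closed:
  assumes "\<And>t. t \<in> S \<Longrightarrow> \<sigma> t \<noteq> [] \<and> set (\<sigma> t) \<subseteq> S" and "t \<in> S"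
  shows "morph_pow \<sigma> k t \<noteq> [] \<and> set (morph_pow \<sigma> k t) \<subseteq> S"
  using assms(2)
proof (induction k arbitrary: t)
  case (Suc k)
  obtain g where "g \<in> set (\<sigma> t)" using assms(1)[OF Suc.prems] by fastforce
  moreover have "\<And>g. g \<in> set (\<sigma> t) \<Longrightarrow> morph_pow \<sigma> k g \<noteq> [] \<and> set (morph_pow \<sigma> k g) \<subseteq> S"
    using Suc assms(1) by blast
  ultimately show ?case unfolding morph_pow_Suc_right morph_word_def by auto
qed simp

lemma morph_word_singleton [simp]: "morph_word (\<lambda>g. [g]) gs = gs"
  by (induction gs) (simp_all add: morph_word_def)

lemma pref_0 [simp]: "pref w 0 = []"
  by (simp add: pref_def)

lemma length_pref [simp]: "length (pref w n) = n"
  by (simp add: pref_def)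

lemma pref_Suc: "pref w (Suc n) = pref w n @ [w n]"
  by (simp add: pref_def)

lemma nth_pref: "i < n \<Longrightarrow> pref w n ! i = w i"
  by (simp add: pref_def)

lemma take_pref: "n \<le> n' \<Longrightarrow> take n (pref w n') = pref w n"
  by (simp add: pref_def take_map)

lemma fixed_point_morph_pow_pref:
  assumes "is_fixed_point \<sigma> w"
  shows "morph_word (morph_pow \<sigma> k) (pref w n) = pref w (length (morph_word (morph_pow \<sigma> k) (pref w n)))"
proof (induction k)
  case (Suc k)
  have "morph_pow \<sigma> (Suc k) = morph_word \<sigma> \<circ> morph_pow \<sigma> k"
    by (rule ext) simp
  then have "morph_word (morph_pow \<sigma> (Suc k)) (pref w n) = morph_word \<sigma> (morph_word (morph_pow \<sigma> k) (pref w n))"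
    by (simp only: morph_word_morph_word)
  then show ?case
    using Suc assms unfolding is_fixed_point_def by metis
qed simp

lemma fixed_point_pref_decomposition:
  assumes fp: "is_fixed_point \<sigma> w" and nonempty: "\<And>i. morph_pow \<sigma> k (w i) \<noteq> []"
  obtains n r where "r < length (morph_pow \<sigma> k (w n))"
    and "pref w N = morph_word (morph_pow \<sigma> k) (pref w n) @ take r (morph_pow \<sigma> k (w n))"
proof -
  define f where "f n = length (morph_word (morph_pow \<sigma> k) (pref w n))" for n
  have f_Suc: "f (Suc n) = f n + length (morph_pow \<sigma> k (w n))" for n
    by (simp add: f_def pref_Suc morph_word_def)
  have "\<exists>n. f n \<le> N' \<and> N' < f (Suc n)" for N'
  proof (induction N')
    case 0
    show ?case using f_Suc[of 0] nonempty[of 0] by (intro exI[of _ 0]) (simp add: f_def morph_word_def)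
  next
    case (Suc N')
    then obtain n where n: "f n \<le> N'" "N' < f (Suc n)" by blast
    show ?case
    proof (cases "Suc N' < f (Suc n)")
      case True
      with n show ?thesis by (auto intro: le_SucI)
    next
      case False
      have "length (morph_pow \<sigma> k (w (Suc n))) > 0" using nonempty by simp
      then show ?thesis
        using False n f_Suc[of "Suc n"] by (intro exI[of _ "Suc n"] conjI; linarith)
    qed
  qed
  then obtain n where n: "f n \<le> N" "N < f (Suc n)" by blast
  have "pref w (f (Suc n)) = morph_word (morph_pow \<sigma> k) (pref w n) @ morph_pow \<sigma> k (w n)"
    using fixed_point_morph_pow_pref[OF fp, of k "Suc n"] unfolding f_def pref_Suc by simp
  then have "pref w N = take N (morph_word (morph_pow \<sigma> k) (pref w n) @ morph_pow \<sigma> k (w n))"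
    using take_pref[of N "f (Suc n)" w] n by simp
  also have "\<dots> = morph_word (morph_pow \<sigma> k) (pref w n) @ take (N - f n) (morph_pow \<sigma> k (w n))"
    using n by (simp add: f_def)
  finally show thesis
    using that[of "N - f n" n] n f_Suc[of n] by linarith
qed

lemma fixed_point_in_alphabet:
  assumes fp: "is_fixed_point \<sigma> w" and "w 0 \<in> S"
    and closed: "\<And>t. t \<in> S \<Longrightarrow> set (\<sigma> t) \<subseteq> S \<and> 2 \<le> length (\<sigma> t)"
  shows "w n \<in> S"
proof (induction n rule: less_induct)
  case (less n)
  show ?case
  proof (cases "n = 0")
    case True
    with \<open>w 0 \<in> S\<close> show ?thesis by simp
  next
    case False
    let ?W = "morph_word \<sigma> (pref w n)"
    have prefix_in_S: "set (pref w n) \<subseteq> S" using less by (auto simp: pref_def)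
    have "(\<Sum>t\<leftarrow>pref w n. 2) \<le> length ?W"
      unfolding length_morph_word using prefix_in_S closed by (intro sum_list_mono) auto
    then have "n < length ?W" using False by (simp add: sum_list_triv)
    moreover have "?W = pref w (length ?W)"
      using fp unfolding is_fixed_point_def by blast
    ultimately have "w n = ?W ! n" by (metis nth_pref)
    also have "\<dots> \<in> set ?W" using \<open>n < length ?W\<close> by (rule nth_mem)
    also have "set ?W \<subseteq> S"
      using prefix_in_S closed by (force simp: set_morph_word)
    finally show ?thesis .
  qed
qed

lemma uniform_fixed_point_pref:
  assumes fp: "is_fixed_point \<phi> u" and uniform: "\<And>t. t \<in> A \<Longrightarrow> length (\<phi> t) = q"
    and in_A: "\<And>n. u n \<in> A"
  shows "pref u (q ^ k) = morph_pow \<phi> k (u 0)"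
proof (induction k)
  case 0
  show ?case by (simp add: pref_def)
next
  case (Suc k)
  have "length (morph_word \<phi> (pref u n)) = q * n" for n
    by (induction n) (simp_all add: pref_Suc uniform in_A)
  then have "pref u (q ^ Suc k) = pref u (length (morph_word \<phi> (pref u (q ^ k))))"
    by (simp add: mult.commute)
  also have "\<dots> = morph_word \<phi> (pref u (q ^ k))"
    using fp unfolding is_fixed_point_def by metis
  finally show ?case using Suc by simp
qed

section \<open>Letter frequencies in fixed points of primitive morphisms\<close>

text \<open>\<open>h\<close> is a positive right eigenvector of the incidence matrix of \<open>\<sigma>\<close>, with eigenvalue \<open>\<beta>\<close>;
  Perron--Frobenius guarantees one, but for the examples below it is written down explicitly.\<close>
locale primitive_morphism =
  fixes \<sigma> :: "'l \<Rightarrow> 'l list" and S :: "'l set"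
    and h :: "'l \<Rightarrow> real" and \<beta> :: real and m :: nat
  assumes finite_alphabet: "finite S" and alphabet_nonempty: "S \<noteq> {}"
    and image_closed: "\<And>t. t \<in> S \<Longrightarrow> \<sigma> t \<noteq> [] \<and> set (\<sigma> t) \<subseteq> S"
    and eigenvector_pos: "\<And>t. t \<in> S \<Longrightarrow> h t > 0"
    and eigenvector: "\<And>t. t \<in> S \<Longrightarrow> (\<Sum>g\<leftarrow>\<sigma> t. h g) = \<beta> * h t"
    and primitive: "\<And>t g. t \<in> S \<Longrightarrow> g \<in> S \<Longrightarrow> g \<in> set (morph_pow \<sigma> m t)"
    and primitive_exponent_pos: "m > 0"
begin

definition occ :: "'l \<Rightarrow> nat \<Rightarrow> 'l \<Rightarrow> real" where
  "occ \<alpha> k t = real (count_list (morph_pow \<sigma> k t) \<alpha>)"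

definition len :: "nat \<Rightarrow> 'l \<Rightarrow> real" where
  "len k t = real (length (morph_pow \<sigma> k t))"

definition freq :: "'l \<Rightarrow> nat \<Rightarrow> 'l \<Rightarrow> real" where
  "freq \<alpha> k t = occ \<alpha> k t / len k t"

definition freq_max :: "'l \<Rightarrow> nat \<Rightarrow> real" where
  "freq_max \<alpha> k = Max (freq \<alpha> k ` S)"

definition freq_min :: "'l \<Rightarrow> nat \<Rightarrow> real" where
  "freq_min \<alpha> k = Min (freq \<alpha> k ` S)"

lemma morph_pow_in_S: "t \<in> S \<Longrightarrow> morph_pow \<sigma> k t \<noteq> [] \<and> set (morph_pow \<sigma> k t) \<subseteq> S"
  using morph_pow_closed[where \<sigma> = \<sigma> and S = S, OF image_closed] by blast

lemma occ_add: "occ \<alpha> (k + j) t = (\<Sum>g\<leftarrow>morph_pow \<sigma> j t. occ \<alpha> k g)"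
  by (simp add: occ_def morph_pow_add count_list_morph_word comp_def flip: sum_list_of_nat)

lemma len_add: "len (k + j) t = (\<Sum>g\<leftarrow>morph_pow \<sigma> j t. len k g)"
  by (simp add: len_def morph_pow_add length_morph_word comp_def flip: sum_list_of_nat)

lemma occ_Suc: "occ \<alpha> (Suc k) t = (\<Sum>g\<leftarrow>\<sigma> t. occ \<alpha> k g)"
  using occ_add[of \<alpha> k 1 t] by simp

lemma len_Suc: "len (Suc k) t = (\<Sum>g\<leftarrow>\<sigma> t. len k g)"
  using len_add[of k 1 t] by simp

lemma len_pos: "t \<in> S \<Longrightarrow> len k t > 0"
  using morph_pow_in_S[of t k] by (simp add: len_def)

lemma eigenvalue_pos: "\<beta> > 0"
proof -
  obtain t where t: "t \<in> S" using alphabet_nonempty by blast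
  have "(\<Sum>g\<leftarrow>\<sigma> t. h g) > 0"
    using sum_list_strict_mono[of "\<sigma> t" "\<lambda>_. 0" h] image_closed[OF t] eigenvector_pos by auto
  with eigenvector[OF t] eigenvector_pos[OF t] show ?thesis by (simp add: zero_less_mult_iff)
qed

lemma sum_eigenvector_morph_pow: "t \<in> S \<Longrightarrow> (\<Sum>g\<leftarrow>morph_pow \<sigma> k t. h g) = \<beta> ^ k * h t"
proof (induction k arbitrary: t)
  case (Suc k)
  have "(\<Sum>g\<leftarrow>morph_pow \<sigma> (Suc k) t. h g) = (\<Sum>t'\<leftarrow>\<sigma> t. \<Sum>g\<leftarrow>morph_pow \<sigma> k t'. h g)"
    unfolding morph_pow_Suc_right sum_list_morph_word ..
  also have "\<dots> = (\<Sum>t'\<leftarrow>\<sigma> t. \<beta> ^ k * h t')"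
    using Suc image_closed by (intro arg_cong[where f = sum_list] map_cong) auto
  also have "\<dots> = \<beta> ^ Suc k * h t"
    using eigenvector[OF Suc.prems] by (simp add: sum_list_const_mult)
  finally show ?case .
qed simp

definition h_min :: real where "h_min = Min (h ` S)"
definition h_max :: real where "h_max = Max (h ` S)"

lemma h_min_le: "t \<in> S \<Longrightarrow> h_min \<le> h t" and le_h_max: "t \<in> S \<Longrightarrow> h t \<le> h_max"
  using finite_alphabet by (simp_all add: h_min_def h_max_def)

lemma h_min_pos: "h_min > 0"
  using Min_in[of "h ` S"] finite_alphabet alphabet_nonempty eigenvector_pos
  by (auto simp: h_min_def)

lemma len_lower: "t \<in> S \<Longrightarrow> \<beta> ^ k * h t \<le> h_max * len k t"
  using sum_list_le_const_mult[of "morph_pow \<sigma> k t" h h_max "\<lambda>_. 1"]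
    morph_pow_in_S le_h_max sum_eigenvector_morph_pow
  by (force simp: len_def sum_list_triv)

lemma len_upper: "t \<in> S \<Longrightarrow> h_min * len k t \<le> \<beta> ^ k * h t"
  using sum_list_ge_const_mult[of "morph_pow \<sigma> k t" h_min "\<lambda>_. 1" h]
    morph_pow_in_S h_min_le sum_eigenvector_morph_pow
  by (force simp: len_def sum_list_triv)

lemma freq_in_range: "t \<in> S \<Longrightarrow> freq_min \<alpha> k \<le> freq \<alpha> k t \<and> freq \<alpha> k t \<le> freq_max \<alpha> k"
  using finite_alphabet by (simp add: freq_min_def freq_max_def)

lemma freq_min_attained: obtains t where "t \<in> S" "freq \<alpha> k t = freq_min \<alpha> k"
  using Min_in[of "freq \<alpha> k ` S"] finite_alphabet alphabet_nonempty
  unfolding freq_min_def by (metis finite_imageI image_iff image_is_empty)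

lemma freq_max_attained: obtains t where "t \<in> S" "freq \<alpha> k t = freq_max \<alpha> k"
  using Max_in[of "freq \<alpha> k ` S"] finite_alphabet alphabet_nonempty
  unfolding freq_max_def by (metis finite_imageI image_iff image_is_empty)

lemma occ_le_freq_max: "t \<in> S \<Longrightarrow> occ \<alpha> k t \<le> freq_max \<alpha> k * len k t"
  using freq_in_range[of t \<alpha> k] len_pos[of t k] by (simp add: freq_def divide_le_eq)

lemma freq_min_le_occ: "t \<in> S \<Longrightarrow> freq_min \<alpha> k * len k t \<le> occ \<alpha> k t"
  using freq_in_range[of t \<alpha> k] len_pos[of t k] by (simp add: freq_def le_divide_eq)

lemma freq_add_in_range:
  assumes "t \<in> S"
  shows "freq_min \<alpha> k \<le> freq \<alpha> (k + j) t \<and> freq \<alpha> (k + j) t \<le> freq_max \<alpha> k"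
proof -
  let ?gs = "morph_pow \<sigma> j t"
  have gs: "set ?gs \<subseteq> S" using morph_pow_in_S[OF assms] by blast
  have "occ \<alpha> (k + j) t \<le> freq_max \<alpha> k * len (k + j) t"
    unfolding occ_add len_add using gs occ_le_freq_max by (intro sum_list_le_const_mult) auto
  moreover have "freq_min \<alpha> k * len (k + j) t \<le> occ \<alpha> (k + j) t"
    unfolding occ_add len_add using gs freq_min_le_occ by (intro sum_list_ge_const_mult) auto
  ultimately show ?thesis
    using len_pos[OF assms] by (simp add: freq_def divide_le_eq le_divide_eq)
qed

lemma freq_max_antimono: "freq_max \<alpha> (k + j) \<le> freq_max \<alpha> k"
  by (metis freq_max_attained freq_add_in_range)

lemma freq_min_mono: "freq_min \<alpha> k \<le> freq_min \<alpha> (k + j)"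
  by (metis freq_min_attained freq_add_in_range)

definition contraction :: real where
  "contraction = (h_min / h_max)\<^sup>2 / \<beta> ^ m"

lemma contraction_pos: "contraction > 0"
  using h_min_pos h_min_le le_h_max alphabet_nonempty eigenvalue_pos
  by (force simp: contraction_def)

text \<open>The eigenvector makes \<open>|\<sigma>\<^sup>k(t)|\<close> comparable to \<open>\<beta>\<^sup>k\<close> uniformly in \<open>k\<close> and \<open>t\<close>,
  which yields a contraction factor independent of \<open>k\<close>.\<close>
lemma len_ratio_lower:
  assumes "g \<in> S" "t \<in> S"
  shows "contraction * len (k + m) t \<le> len k g"
proof -
  have pos: "h_max > 0" "\<beta> ^ k > 0" "\<beta> ^ m > 0"
    using h_min_pos h_min_le[OF assms(1)] le_h_max[OF assms(1)] eigenvalue_pos by auto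
  have "h_min * len (k + m) t \<le> \<beta> ^ (k + m) * h_max"
    using len_upper[OF assms(2)] le_h_max[OF assms(2)] eigenvalue_pos
    by (meson mult_left_mono order.trans zero_le_power less_imp_le)
  have "\<beta> ^ k * h_min \<le> h_max * len k g"
    using len_lower[OF assms(1)] h_min_le[OF assms(1)] eigenvalue_pos
    by (meson mult_left_mono order.trans zero_le_power less_imp_le)
  have "contraction * len (k + m) t = h_min * (h_min * len (k + m) t) / (h_max\<^sup>2 * \<beta> ^ m)"
    by (simp add: contraction_def power_divide power2_eq_square)
  also have "\<dots> \<le> h_min * (\<beta> ^ (k + m) * h_max) / (h_max\<^sup>2 * \<beta> ^ m)"
    using \<open>h_min * len (k + m) t \<le> _\<close> h_min_pos pos
    by (intro divide_right_mono mult_left_mono) auto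
  also have "\<dots> = \<beta> ^ k * h_min / h_max"
    using pos eigenvalue_pos by (simp add: power_add power2_eq_square field_simps)
  also have "\<dots> \<le> len k g"
    using \<open>\<beta> ^ k * h_min \<le> _\<close> pos by (simp add: divide_le_eq mult.commute)
  finally show ?thesis .
qed

lemma freq_min_le_max: "freq_min \<alpha> k \<le> freq_max \<alpha> k"
  by (metis freq_min_attained freq_in_range)

text \<open>Since every letter occurs in every \<open>\<sigma>\<^sup>m(t)\<close>, the block of \<open>\<sigma>\<^sup>k\<^sup>+\<^sup>m(t)\<close> realizing the
  maximal frequency contains a block of minimal frequency, which pulls it down.\<close>
lemma freq_max_contract:
  "freq_max \<alpha> (k + m) \<le> freq_max \<alpha> k - contraction * (freq_max \<alpha> k - freq_min \<alpha> k)"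
proof -
  obtain t where t: "t \<in> S" "freq \<alpha> (k + m) t = freq_max \<alpha> (k + m)" by (rule freq_max_attained)
  obtain g where g: "g \<in> S" "freq \<alpha> k g = freq_min \<alpha> k" by (rule freq_min_attained)
  let ?gs = "morph_pow \<sigma> m t"
  define excess where "excess t' = freq_max \<alpha> k * len k t' - occ \<alpha> k t'" for t'
  have gs: "set ?gs \<subseteq> S" using morph_pow_in_S[OF t(1)] by blast
  have occ_g: "occ \<alpha> k g = freq_min \<alpha> k * len k g"
    using g len_pos[OF g(1), of k] by (simp add: freq_def field_simps)
  have "excess g \<le> (\<Sum>t'\<leftarrow>?gs. excess t')"
    using primitive[OF t(1) g(1)] gs occ_le_freq_max
    by (intro member_le_sum_list_nonneg) (auto simp: excess_def)
  also have "\<dots> = freq_max \<alpha> k * len (k + m) t - occ \<alpha> (k + m) t"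
    by (simp add: excess_def occ_add len_add sum_list_subtractf sum_list_const_mult)
  finally have "occ \<alpha> (k + m) t \<le> freq_max \<alpha> k * len (k + m) t - (freq_max \<alpha> k - freq_min \<alpha> k) * len k g"
    by (simp add: excess_def occ_g algebra_simps)
  also have "\<dots> \<le> freq_max \<alpha> k * len (k + m) t - (freq_max \<alpha> k - freq_min \<alpha> k) * (contraction * len (k + m) t)"
    using len_ratio_lower[OF g(1) t(1)] freq_min_le_max[of \<alpha> k] by (simp add: mult_left_mono)
  finally have "occ \<alpha> (k + m) t
      \<le> (freq_max \<alpha> k - contraction * (freq_max \<alpha> k - freq_min \<alpha> k)) * len (k + m) t"
    by (simp add: algebra_simps)
  with t len_pos[OF t(1), of "k + m"] show ?thesis
    by (metis freq_def pos_divide_le_eq)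
qed

lemma contraction_le_1: "contraction \<le> 1"
proof -
  obtain t where t: "t \<in> S" using alphabet_nonempty by blast
  have "1 \<le> len m t"
    using len_pos[OF t, of m] by (simp add: len_def Suc_le_eq)
  then have "contraction \<le> contraction * len m t"
    using contraction_pos by simp
  moreover have "contraction * len m t \<le> 1"
    using len_ratio_lower[OF t t, of 0] by (simp add: len_def)
  ultimately show ?thesis by linarith
qed

lemma freq_spread_contract:
  "freq_max \<alpha> (k + m) - freq_min \<alpha> (k + m) \<le> (1 - contraction) * (freq_max \<alpha> k - freq_min \<alpha> k)"
  using freq_max_contract[of \<alpha> k] freq_min_mono[of \<alpha> k m] by (simp add: algebra_simps)

lemma freq_spread_power:
  "freq_max \<alpha> (j * m) - freq_min \<alpha> (j * m) \<le> (1 - contraction) ^ j * (freq_max \<alpha> 0 - freq_min \<alpha> 0)"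
proof (induction j)
  case (Suc j)
  have "freq_max \<alpha> (Suc j * m) - freq_min \<alpha> (Suc j * m)
      \<le> (1 - contraction) * (freq_max \<alpha> (j * m) - freq_min \<alpha> (j * m))"
    using freq_spread_contract[of \<alpha> "j * m"] by (simp add: add.commute)
  also have "\<dots> \<le> (1 - contraction) ^ Suc j * (freq_max \<alpha> 0 - freq_min \<alpha> 0)"
    using mult_left_mono[OF Suc.IH, of "1 - contraction"] contraction_le_1 by (simp add: mult.assoc)
  finally show ?case .
qed simp

lemma freq_tendsto: obtains \<theta> where "\<And>t. t \<in> S \<Longrightarrow> (\<lambda>k. freq \<alpha> k t) \<longlonglongrightarrow> \<theta>"
proof -
  have "decseq (freq_max \<alpha>)"
    by (metis decseq_def freq_max_antimono le_add_diff_inverse)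
  moreover have "freq_min \<alpha> 0 \<le> freq_max \<alpha> k" for k
    using freq_min_mono[of \<alpha> 0 k] freq_min_le_max[of \<alpha> k] by simp
  ultimately obtain \<theta> where max_lim: "freq_max \<alpha> \<longlonglongrightarrow> \<theta>"
    using decseq_convergent by blast
  have "incseq (freq_min \<alpha>)"
    by (metis incseq_def freq_min_mono le_add_diff_inverse)
  moreover have "freq_min \<alpha> k \<le> freq_max \<alpha> 0" for k
    using freq_max_antimono[of \<alpha> 0 k] freq_min_le_max[of \<alpha> k] by simp
  ultimately obtain \<theta>' where min_lim: "freq_min \<alpha> \<longlonglongrightarrow> \<theta>'"
    using incseq_convergent by blast
  have "(\<lambda>j. freq_max \<alpha> (j * m) - freq_min \<alpha> (j * m)) \<longlonglongrightarrow> 0"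
  proof (rule tendsto_sandwich[OF always_eventually always_eventually tendsto_const])
    show "\<forall>j. 0 \<le> freq_max \<alpha> (j * m) - freq_min \<alpha> (j * m)"
      using freq_min_le_max by simp
    show "\<forall>j. freq_max \<alpha> (j * m) - freq_min \<alpha> (j * m)
        \<le> (1 - contraction) ^ j * (freq_max \<alpha> 0 - freq_min \<alpha> 0)"
      using freq_spread_power by blast
    show "(\<lambda>j. (1 - contraction) ^ j * (freq_max \<alpha> 0 - freq_min \<alpha> 0)) \<longlonglongrightarrow> 0"
      using contraction_pos contraction_le_1 by (intro tendsto_mult_left_zero LIMSEQ_power_zero) auto
  qed
  moreover have "strict_mono (\<lambda>j. j * m)"
    using primitive_exponent_pos by (simp add: strict_mono_def)
  then have "(\<lambda>j. freq_max \<alpha> (j * m) - freq_min \<alpha> (j * m)) \<longlonglongrightarrow> \<theta> - \<theta>'"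
    using LIMSEQ_subseq_LIMSEQ[OF tendsto_diff[OF max_lim min_lim]] by (simp add: comp_def)
  ultimately have "\<theta>' = \<theta>" using LIMSEQ_unique by fastforce
  show thesis
  proof (rule that)
    fix t assume "t \<in> S"
    have "freq_min \<alpha> \<longlonglongrightarrow> \<theta>" using min_lim \<open>\<theta>' = \<theta>\<close> by simp
    from tendsto_sandwich[OF always_eventually always_eventually this max_lim]
    show "(\<lambda>k. freq \<alpha> k t) \<longlonglongrightarrow> \<theta>"
      using freq_in_range[OF \<open>t \<in> S\<close>] by auto
  qed
qed

lemma discrepancy_normalized_tendsto_0:
  assumes "t \<in> S" and lim: "(\<lambda>k. freq \<alpha> k t) \<longlonglongrightarrow> \<theta>"
  shows "(\<lambda>k. (occ \<alpha> k t - \<theta> * len k t) / \<beta> ^ k) \<longlonglongrightarrow> 0"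
proof -
  have bound: "\<bar>(occ \<alpha> k t - \<theta> * len k t) / \<beta> ^ k\<bar> \<le> h t / h_min * \<bar>freq \<alpha> k t - \<theta>\<bar>" for k
  proof -
    have "occ \<alpha> k t - \<theta> * len k t = len k t * (freq \<alpha> k t - \<theta>)"
      using len_pos[OF assms(1), of k] by (simp add: freq_def algebra_simps)
    then have "\<bar>(occ \<alpha> k t - \<theta> * len k t) / \<beta> ^ k\<bar> = len k t / \<beta> ^ k * \<bar>freq \<alpha> k t - \<theta>\<bar>"
      using len_pos[OF assms(1), of k] eigenvalue_pos by (simp add: abs_mult abs_divide)
    moreover have "len k t / \<beta> ^ k \<le> h t / h_min"
      using len_upper[OF assms(1), of k] h_min_pos eigenvalue_pos
      by (simp add: divide_le_eq le_divide_eq mult.commute)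
    ultimately show ?thesis
      by (metis abs_ge_zero mult_right_mono)
  qed
  show ?thesis
    using bound by (intro tendsto_0_le[OF LIM_zero[OF lim], of _ "h t / h_min"]) (simp add: mult.commute)
qed

text \<open>The weighted discrepancy \<open>\<Sum>\<^sub>t \<mu>(t) (occ\<^sub>k(t) - \<theta> len\<^sub>k(t))\<close> is multiplied by \<open>\<beta>\<close>
  at each step, yet it is \<open>o(\<beta>\<^sup>k)\<close>, so it vanishes already at \<open>k = 0\<close>.\<close>
lemma freq_limit_left_eigenvector:
  assumes left_eigenvector: "\<And>f. (\<Sum>t\<in>S. \<mu> t * (\<Sum>g\<leftarrow>\<sigma> t. f g)) = \<beta> * (\<Sum>t\<in>S. \<mu> t * f t)"
    and "\<alpha> \<in> S" and lim: "\<And>t. t \<in> S \<Longrightarrow> (\<lambda>k. freq \<alpha> k t) \<longlonglongrightarrow> \<theta>"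
  shows "\<theta> * (\<Sum>t\<in>S. \<mu> t) = \<mu> \<alpha>"
proof -
  define G where "G k = (\<Sum>t\<in>S. \<mu> t * (occ \<alpha> k t - \<theta> * len k t))" for k
  have "G (Suc k) = \<beta> * G k" for k
    using left_eigenvector[of "\<lambda>g. occ \<alpha> k g - \<theta> * len k g"]
    by (simp add: G_def occ_Suc len_Suc sum_list_subtractf sum_list_const_mult)
  then have G_pow: "G k = \<beta> ^ k * G 0" for k
    by (induction k) simp_all
  have "(\<lambda>k. \<Sum>t\<in>S. \<mu> t * ((occ \<alpha> k t - \<theta> * len k t) / \<beta> ^ k)) \<longlonglongrightarrow> (\<Sum>t\<in>S. \<mu> t * 0)"
    using discrepancy_normalized_tendsto_0 lim by (intro tendsto_intros) auto
  moreover have "(\<Sum>t\<in>S. \<mu> t * ((occ \<alpha> k t - \<theta> * len k t) / \<beta> ^ k)) = G 0" for k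
    using G_pow[of k] eigenvalue_pos by (simp add: G_def sum_divide_distrib[symmetric])
  ultimately have "G 0 = 0"
    by (simp add: LIMSEQ_const_iff)
  moreover have "G 0 = (\<Sum>t\<in>S. (if t = \<alpha> then \<mu> t else 0) - \<theta> * \<mu> t)"
    unfolding G_def by (intro sum.cong) (simp_all add: occ_def len_def algebra_simps)
  then have "G 0 = \<mu> \<alpha> - \<theta> * (\<Sum>t\<in>S. \<mu> t)"
    using \<open>\<alpha> \<in> S\<close> finite_alphabet by (simp add: sum_subtractf sum_distrib_left)
  ultimately show ?thesis by simp
qed

lemma image_discrepancy_le:
  assumes "set ts \<subseteq> S" and close: "\<And>t. t \<in> S \<Longrightarrow> \<bar>freq \<alpha> k t - \<theta>\<bar> \<le> \<epsilon>"
  defines "W \<equiv> morph_word (morph_pow \<sigma> k) ts"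
  shows "\<bar>real (count_list W \<alpha>) - \<theta> * real (length W)\<bar> \<le> \<epsilon> * real (length W)"
proof -
  have "\<bar>occ \<alpha> k t - \<theta> * len k t\<bar> \<le> \<epsilon> * len k t" if "t \<in> S" for t
  proof -
    have "occ \<alpha> k t - \<theta> * len k t = len k t * (freq \<alpha> k t - \<theta>)"
      using len_pos[OF that, of k] by (simp add: freq_def algebra_simps)
    then have "\<bar>occ \<alpha> k t - \<theta> * len k t\<bar> = len k t * \<bar>freq \<alpha> k t - \<theta>\<bar>"
      using len_pos[OF that, of k] by (simp add: abs_mult)
    also have "\<dots> \<le> len k t * \<epsilon>"
      using close[OF that] len_pos[OF that, of k] by (simp add: mult_left_mono)
    finally show ?thesis by (simp add: mult.commute)
  qed
  then have "(\<Sum>t\<leftarrow>ts. \<bar>occ \<alpha> k t - \<theta> * len k t\<bar>) \<le> \<epsilon> * (\<Sum>t\<leftarrow>ts. len k t)"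
    using assms(1) by (intro sum_list_le_const_mult) auto
  with sum_list_abs[of "map (\<lambda>t. occ \<alpha> k t - \<theta> * len k t) ts"]
  have "\<bar>\<Sum>t\<leftarrow>ts. occ \<alpha> k t - \<theta> * len k t\<bar> \<le> \<epsilon> * (\<Sum>t\<leftarrow>ts. len k t)"
    by (simp add: comp_def)
  then show ?thesis
    by (simp add: W_def occ_def len_def count_list_morph_word length_morph_word comp_def
        sum_list_subtractf sum_list_const_mult flip: sum_list_of_nat)
qed

lemma fixed_point_pref_discrepancy_le:
  assumes fp: "is_fixed_point \<sigma> w" and in_S: "\<And>i. w i \<in> S"
    and close: "\<And>t. t \<in> S \<Longrightarrow> \<bar>freq \<alpha> k t - \<theta>\<bar> \<le> \<epsilon>" and "\<epsilon> \<ge> 0"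
  shows "\<bar>real (count_list (pref w N) \<alpha>) - \<theta> * real N\<bar> \<le> \<epsilon> * real N + (1 + \<bar>\<theta>\<bar>) * (\<Sum>t\<in>S. len k t)"
proof -
  have "\<And>i. morph_pow \<sigma> k (w i) \<noteq> []" using morph_pow_in_S in_S by blast
  then obtain n r where r: "r < length (morph_pow \<sigma> k (w n))"
    and split: "pref w N = morph_word (morph_pow \<sigma> k) (pref w n) @ take r (morph_pow \<sigma> k (w n))"
    by (rule fixed_point_pref_decomposition[OF fp])
  define W where "W = morph_word (morph_pow \<sigma> k) (pref w n)"
  define R where "R = take r (morph_pow \<sigma> k (w n))"
  have N: "real N = real (length W) + real (length R)"
    using arg_cong[OF split, of length] by (simp add: W_def R_def)
  have "set (pref w n) \<subseteq> S" using in_S by (auto simp: pref_def)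
  then have "\<bar>real (count_list W \<alpha>) - \<theta> * real (length W)\<bar> \<le> \<epsilon> * real (length W)"
    unfolding W_def using close by (rule image_discrepancy_le)
  also have "\<dots> \<le> \<epsilon> * real N"
    using N \<open>\<epsilon> \<ge> 0\<close> by (simp add: mult_left_mono)
  finally have W_bound: "\<bar>real (count_list W \<alpha>) - \<theta> * real (length W)\<bar> \<le> \<epsilon> * real N" .
  have "\<bar>real (count_list R \<alpha>) - \<theta> * real (length R)\<bar> \<le> (1 + \<bar>\<theta>\<bar>) * real (length R)"
    using abs_triangle_ineq4[of "real (count_list R \<alpha>)" "\<theta> * real (length R)"] count_le_length[of R \<alpha>]
    by (simp add: abs_mult distrib_right)
  also have "real (length R) \<le> len k (w n)" using r by (simp add: R_def len_def)
  also have "\<dots> \<le> (\<Sum>t\<in>S. len k t)"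
    using in_S finite_alphabet len_pos by (intro member_le_sum) (auto intro: less_imp_le)
  finally have R_bound: "\<bar>real (count_list R \<alpha>) - \<theta> * real (length R)\<bar> \<le> (1 + \<bar>\<theta>\<bar>) * (\<Sum>t\<in>S. len k t)"
    by (simp add: mult_left_mono)
  have "count_list (pref w N) \<alpha> = count_list W \<alpha> + count_list R \<alpha>"
    by (simp add: split W_def R_def)
  then show ?thesis
    using W_bound R_bound N abs_triangle_ineq[of "real (count_list W \<alpha>) - \<theta> * real (length W)"
        "real (count_list R \<alpha>) - \<theta> * real (length R)"]
    by (simp add: algebra_simps)
qed

lemma fixed_point_freq_tendsto:
  assumes fp: "is_fixed_point \<sigma> w" and in_S: "\<And>i. w i \<in> S"
    and lim: "\<And>t. t \<in> S \<Longrightarrow> (\<lambda>k. freq \<alpha> k t) \<longlonglongrightarrow> \<theta>"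
  shows "(\<lambda>N. real (count_list (pref w N) \<alpha>) / real N) \<longlonglongrightarrow> \<theta>"
proof (rule LIMSEQ_I)
  fix \<epsilon> :: real assume "\<epsilon> > 0"
  have "\<forall>\<^sub>F k in sequentially. \<forall>t\<in>S. \<bar>freq \<alpha> k t - \<theta>\<bar> < \<epsilon> / 2"
  proof (rule eventually_ball_finite[OF finite_alphabet], rule ballI)
    fix t assume "t \<in> S"
    show "\<forall>\<^sub>F k in sequentially. \<bar>freq \<alpha> k t - \<theta>\<bar> < \<epsilon> / 2"
      using tendstoD[OF lim[OF \<open>t \<in> S\<close>], of "\<epsilon> / 2"] \<open>\<epsilon> > 0\<close> by (simp add: dist_real_def)
  qed
  then obtain k where k: "\<And>t. t \<in> S \<Longrightarrow> \<bar>freq \<alpha> k t - \<theta>\<bar> < \<epsilon> / 2"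
    by (auto simp: eventually_sequentially)
  define tail where "tail = (1 + \<bar>\<theta>\<bar>) * (\<Sum>t\<in>S. len k t)"
  obtain N0 :: nat where N0: "2 * tail / \<epsilon> < real N0" using reals_Archimedean2 by blast
  have "\<bar>real (count_list (pref w N) \<alpha>) / real N - \<theta>\<bar> < \<epsilon>" if "N0 < N" for N
  proof -
    have "\<bar>real (count_list (pref w N) \<alpha>) - \<theta> * real N\<bar> \<le> \<epsilon> / 2 * real N + tail"
      unfolding tail_def using \<open>\<epsilon> > 0\<close> by (intro fixed_point_pref_discrepancy_le[OF fp in_S k[THEN less_imp_le]]) auto
    also have "\<dots> < \<epsilon> * real N"
    proof -
      have "2 * tail < \<epsilon> * real N0"
        using N0 \<open>\<epsilon> > 0\<close> by (simp add: divide_less_eq mult.commute)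
      also have "\<dots> < \<epsilon> * real N"
        using that \<open>\<epsilon> > 0\<close> by simp
      finally show ?thesis by linarith
    qed
    finally have "\<bar>real (count_list (pref w N) \<alpha>) - \<theta> * real N\<bar> / real N < \<epsilon>"
      using that by (simp add: pos_divide_less_eq)
    moreover have "real (count_list (pref w N) \<alpha>) / real N - \<theta>
        = (real (count_list (pref w N) \<alpha>) - \<theta> * real N) / real N"
      using that by (simp add: field_simps)
    ultimately show ?thesis by (simp add: abs_divide)
  qed
  then show "\<exists>N0. \<forall>N\<ge>N0. norm (real (count_list (pref w N) \<alpha>) / real N - \<theta>) < \<epsilon>"
    by (intro exI[of _ "Suc N0"]) auto
qed

end

section \<open>Letter frequencies of automatic sequences are rational\<close>

lemma finite_functions_linearly_dependent:
  fixes v :: "'i \<Rightarrow> 'b \<Rightarrow> 'a::field"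
  assumes "finite A" "finite I" "card A < card I"
  shows "\<exists>r. (\<exists>i\<in>I. r i \<noteq> 0) \<and> (\<forall>t\<in>A. (\<Sum>i\<in>I. r i * v i t) = 0)"
  using assms
proof (induction A arbitrary: I v rule: finite_induct)
  case empty
  then have "I \<noteq> {}" by auto
  then obtain i where "i \<in> I" by blast
  then show ?case by (intro exI[of _ "\<lambda>_. 1"]) auto
next
  case (insert t0 A)
  show ?case
  proof (cases "\<forall>i\<in>I. v i t0 = 0")
    case True
    have "card A < card I" using insert.hyps(1,2) insert.prems(2) by simp
    then obtain r where "\<exists>i\<in>I. r i \<noteq> 0" "\<forall>t\<in>A. (\<Sum>i\<in>I. r i * v i t) = 0"
      using insert.IH[of I v] insert.prems(1) by blast
    with True show ?thesis by auto
  next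
    case False
    then obtain j where j: "j \<in> I" "v j t0 \<noteq> 0" by blast
    define coef where "coef i = v i t0 / v j t0" for i
    define v' where "v' i t = v i t - coef i * v j t" for i t
    have "card A < card (I - {j})" using insert.hyps(1,2) insert.prems j by simp
    then obtain r' where r': "\<exists>i\<in>I - {j}. r' i \<noteq> 0" "\<forall>t\<in>A. (\<Sum>i\<in>I - {j}. r' i * v' i t) = 0"
      using insert.IH[of "I - {j}" v'] insert.prems(1) by blast
    define r where "r i = (if i = j then - (\<Sum>i\<in>I - {j}. r' i * coef i) else r' i)" for i
    have "(\<Sum>i\<in>I. r i * v i t) = (\<Sum>i\<in>I - {j}. r' i * v' i t)" for t
    proof -
      have "(\<Sum>i\<in>I. r i * v i t) = r j * v j t + (\<Sum>i\<in>I - {j}. r' i * v i t)"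
        using j insert.prems(1) by (simp add: sum.remove[of I j] r_def)
      also have "\<dots> = (\<Sum>i\<in>I - {j}. r' i * v i t) - (\<Sum>i\<in>I - {j}. r' i * coef i * v j t)"
        by (simp add: r_def sum_distrib_right)
      also have "\<dots> = (\<Sum>i\<in>I - {j}. r' i * v' i t)"
        by (simp add: v'_def right_diff_distrib mult.assoc sum_subtractf)
      finally show ?thesis .
    qed
    moreover have "v' i t0 = 0" for i
      using j by (simp add: v'_def coef_def)
    ultimately show ?thesis
      using r' by (intro exI[of _ r]) (auto simp: r_def)
  qed
qed

lemma morph_pow_count_linear_recurrence:
  assumes "finite A" and closed: "\<And>t. t \<in> A \<Longrightarrow> set (\<phi> t) \<subseteq> A" and "t0 \<in> A"
  shows "\<exists>n (r :: nat \<Rightarrow> rat). (\<exists>i<n. r i \<noteq> 0) \<and>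
           (\<forall>k. (\<Sum>i<n. r i * of_nat (length (filter P (morph_pow \<phi> (k + i) t0)))) = 0)"
proof -
  define cnt where "cnt k t = (of_nat (length (filter P (morph_pow \<phi> k t))) :: rat)" for k t
  have cnt_Suc: "cnt (Suc k) t = (\<Sum>g\<leftarrow>\<phi> t. cnt k g)" for k t
    unfolding cnt_def morph_pow_Suc_right length_filter_morph_word by (simp add: comp_def flip: sum_list_of_nat)
  define n where "n = Suc (card A)"
  obtain r where r: "\<exists>i\<in>{..<n}. r i \<noteq> 0"
    and vanish: "\<forall>t\<in>A. (\<Sum>i<n. r i * cnt i t) = 0"
    using finite_functions_linearly_dependent[of A "{..<n}" cnt] \<open>finite A\<close> by (auto simp: n_def)
  have "\<forall>t\<in>A. (\<Sum>i<n. r i * cnt (k + i) t) = 0" for k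
  proof (induction k)
    case (Suc k)
    show ?case
    proof
      fix t assume "t \<in> A"
      have "(\<Sum>i<n. r i * cnt (Suc k + i) t) = (\<Sum>i<n. \<Sum>g\<leftarrow>\<phi> t. r i * cnt (k + i) g)"
        by (simp only: add_Suc cnt_Suc sum_list_const_mult)
      also have "\<dots> = (\<Sum>g\<leftarrow>\<phi> t. \<Sum>i<n. r i * cnt (k + i) g)"
        by (rule sum_sum_list_swap)
      also have "\<dots> = (\<Sum>g\<leftarrow>\<phi> t. 0)"
        using Suc closed[OF \<open>t \<in> A\<close>] by (intro arg_cong[where f = sum_list] map_cong) auto
      also have "\<dots> = 0" by simp
      finally show "(\<Sum>i<n. r i * cnt (Suc k + i) t) = 0" .
    qed
  qed (use vanish in simp)
  then have "\<forall>k. (\<Sum>i<n. r i * cnt (k + i) t0) = 0" using \<open>t0 \<in> A\<close> by blast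
  moreover have "\<exists>i<n. r i \<noteq> 0" using r by blast
  ultimately show ?thesis
    unfolding cnt_def by (intro exI[of _ n] exI[of _ r]) blast
qed

text \<open>\<open>poly_shift_seq p s\<close> is the sequence \<open>p(E) s\<close>, where \<open>E\<close> is the shift \<open>(E s)\<^sub>k = s\<^sub>k\<^sub>+\<^sub>1\<close>.\<close>
definition poly_shift_seq :: "rat poly \<Rightarrow> (nat \<Rightarrow> real) \<Rightarrow> nat \<Rightarrow> real" where
  "poly_shift_seq p s k = (\<Sum>i\<le>degree p. of_rat (coeff p i) * s (k + i))"

lemma poly_shift_seq_eq_sum:
  assumes "degree p < N"
  shows "poly_shift_seq p s k = (\<Sum>i<N. of_rat (coeff p i) * s (k + i))"
proof -
  have "(\<Sum>i<N. of_rat (coeff p i) * s (k + i)) = (\<Sum>i\<le>degree p. of_rat (coeff p i) * s (k + i))"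
    using assms by (intro sum.mono_neutral_right) (auto simp: coeff_eq_0)
  then show ?thesis by (simp add: poly_shift_seq_def)
qed

lemma poly_shift_seq_Rats: "(\<And>k. s k \<in> \<rat>) \<Longrightarrow> poly_shift_seq p s k \<in> \<rat>"
  unfolding poly_shift_seq_def by (intro Rats_sum Rats_mult) auto

lemma poly_shift_seq_tendsto:
  assumes "s \<longlonglongrightarrow> \<theta>"
  shows "poly_shift_seq p s \<longlonglongrightarrow> of_rat (poly p 1) * \<theta>"
proof -
  have "(\<lambda>k. poly_shift_seq p s k) \<longlonglongrightarrow> (\<Sum>i\<le>degree p. of_rat (coeff p i) * \<theta>)"
    unfolding poly_shift_seq_def
    using assms by (intro tendsto_sum tendsto_mult tendsto_const LIMSEQ_ignore_initial_segment)
  then show ?thesis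
    by (simp add: poly_altdef of_rat_sum sum_distrib_right)
qed

lemma poly_shift_seq_X_minus_1:
  "poly_shift_seq ([:-1, 1:] * p) s k = poly_shift_seq p s (Suc k) - poly_shift_seq p s k"
proof -
  define N where "N = Suc (degree p)"
  have "degree ([:-1, 1:] * p) < Suc N"
    using degree_mult_le[of "[:-1, 1:]" p] by (simp add: N_def)
  then have "poly_shift_seq ([:-1, 1:] * p) s k
      = (\<Sum>i<Suc N. of_rat (coeff (pCons 0 p) i) * s (k + i)) - (\<Sum>i<Suc N. of_rat (coeff p i) * s (k + i))"
    by (simp add: poly_shift_seq_eq_sum mult_pCons_left smult_minus_left of_rat_diff left_diff_distrib
        sum_subtractf)
  also have "(\<Sum>i<Suc N. of_rat (coeff (pCons 0 p) i) * s (k + i))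
      = (\<Sum>i<N. of_rat (coeff p i) * s (Suc k + i))"
    by (subst sum.lessThan_Suc_shift) simp
  also have "\<dots> = poly_shift_seq p s (Suc k)"
    by (rule poly_shift_seq_eq_sum[symmetric]) (simp add: N_def)
  also have "(\<Sum>i<Suc N. of_rat (coeff p i) * s (k + i)) = poly_shift_seq p s k"
    by (rule poly_shift_seq_eq_sum[symmetric]) (simp add: N_def)
  finally show ?thesis .
qed

text \<open>Induction on the multiplicity of the root 1: if \<open>p(1) \<noteq> 0\<close> the limit forces \<open>\<theta> = 0\<close>;
  otherwise \<open>p = (X - 1) q\<close> and \<open>q(E) s\<close> is a constant rational sequence tending to \<open>q(1) \<theta>\<close>.\<close>
lemma rational_limit_if_poly_shift_seq_vanishes:
  assumes rat: "\<And>k. s k \<in> \<rat>" and lim: "s \<longlonglongrightarrow> \<theta>"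
  shows "p \<noteq> 0 \<Longrightarrow> (\<And>k. poly_shift_seq p s k = 0) \<Longrightarrow> \<theta> \<in> \<rat>"
proof (induction "degree p" arbitrary: p rule: less_induct)
  case less
  show ?case
  proof (cases "poly p 1 = 0")
    case False
    have "poly_shift_seq p s = (\<lambda>_. 0)" using less.prems(2) by (simp add: fun_eq_iff)
    with poly_shift_seq_tendsto[OF lim, of p] have "of_rat (poly p 1) * \<theta> = 0"
      by (simp add: LIMSEQ_const_iff)
    with False show ?thesis by simp
  next
    case True
    then obtain q where p: "p = [:-1, 1:] * q"
      by (metis dvdE poly_eq_0_iff_dvd)
    with less.prems(1) have "q \<noteq> 0" by auto
    then have deg: "degree q < degree p"
      unfolding p by (subst degree_mult_eq) auto
    have "poly_shift_seq q s (Suc k) = poly_shift_seq q s k" for k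
      using less.prems(2)[of k] poly_shift_seq_X_minus_1[of q s k] p by simp
    then have const: "poly_shift_seq q s k = poly_shift_seq q s 0" for k
      by (induction k) simp_all
    then have "poly_shift_seq q s = (\<lambda>_. poly_shift_seq q s 0)"
      by (simp add: fun_eq_iff)
    then have limit: "poly_shift_seq q s 0 = of_rat (poly q 1) * \<theta>"
      using poly_shift_seq_tendsto[OF lim, of q] by (metis LIMSEQ_const_iff)
    show ?thesis
    proof (cases "poly q 1 = 0")
      case False
      then have "\<theta> = poly_shift_seq q s 0 / of_rat (poly q 1)"
        using limit by simp
      then show ?thesis using poly_shift_seq_Rats[OF rat] by simp
    next
      case True
      then show ?thesis
        using less.hyps[OF deg \<open>q \<noteq> 0\<close>] const limit by simp
    qed
  qed
qed

lemma rational_limit_if_linear_recurrence: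
  fixes r :: "nat \<Rightarrow> rat" and s :: "nat \<Rightarrow> real"
  assumes "\<And>k. s k \<in> \<rat>" and "s \<longlonglongrightarrow> \<theta>"
    and "\<exists>i<n. r i \<noteq> 0" and recurrence: "\<And>k. (\<Sum>i<n. of_rat (r i) * s (k + i)) = 0"
  shows "\<theta> \<in> \<rat>"
proof -
  define p where "p = Poly (map r [0..<n])"
  have coeff_p: "coeff p i = (if i < n then r i else 0)" for i
    by (simp add: p_def nth_default_def)
  have "p \<noteq> 0" using assms(3) coeff_p by (metis coeff_0)
  moreover have "poly_shift_seq p s k = 0" for k
  proof -
    have "poly_shift_seq p s k = (\<Sum>i<max n (Suc (degree p)). of_rat (coeff p i) * s (k + i))"
      by (simp add: poly_shift_seq_eq_sum)
    also have "\<dots> = (\<Sum>i<n. of_rat (coeff p i) * s (k + i))"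
      by (intro sum.mono_neutral_right) (auto simp: coeff_p)
    finally show ?thesis using recurrence by (simp add: coeff_p)
  qed
  ultimately show ?thesis
    using rational_limit_if_poly_shift_seq_vanishes[OF assms(1,2)] by blast
qed

text \<open>Cobham's argument: the prefix of length \<open>q\<^sup>k\<close> is the image of \<open>\<phi>\<^sup>k(u\<^sub>0)\<close>, and any
  \<open>|A| + 1\<close> of the count vectors \<open>t \<mapsto> #\<^sub>\<alpha>(\<phi>\<^sup>k(t))\<close> are linearly dependent, a relation
  which \<open>\<phi>\<close> propagates to all later \<open>k\<close>.\<close>
lemma automatic_count_linear_recurrence:
  assumes "q_automatic q w"
  obtains n and r :: "nat \<Rightarrow> rat" where "\<exists>i<n. r i \<noteq> 0"
    and "\<And>k. (\<Sum>i<n. r i * of_nat (count_list (pref w (q ^ (k + i))) \<alpha>)) = 0"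
proof -
  obtain A \<phi> u and \<tau> :: "nat \<Rightarrow> 'a" where "finite A"
    and \<phi>: "\<forall>t\<in>A. length (\<phi> t) = q \<and> set (\<phi> t) \<subseteq> A"
    and in_A: "\<forall>n. u n \<in> A" and fp: "is_fixed_point \<phi> u" and w: "\<forall>n. w n = \<tau> (u n)"
    using assms unfolding q_automatic_def by blast
  define P where "P g \<longleftrightarrow> \<tau> g = \<alpha>" for g
  have "count_list (pref w N) \<alpha> = length (filter P (pref u N))" for N
    by (induction N) (simp_all add: pref_Suc w P_def)
  moreover have "pref u (q ^ k) = morph_pow \<phi> k (u 0)" for k
    by (rule uniform_fixed_point_pref[where A = A, OF fp]) (use \<phi> in_A in auto)
  ultimately have count: "count_list (pref w (q ^ k)) \<alpha> = length (filter P (morph_pow \<phi> k (u 0)))" for k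
    by simp
  have "\<exists>n (r :: nat \<Rightarrow> rat). (\<exists>i<n. r i \<noteq> 0) \<and>
      (\<forall>k. (\<Sum>i<n. r i * of_nat (length (filter P (morph_pow \<phi> (k + i) (u 0))))) = 0)"
    by (rule morph_pow_count_linear_recurrence[OF \<open>finite A\<close>]) (use \<phi> in_A in auto)
  with that show thesis
    unfolding count by blast
qed

lemma automatic_freq_rational:
  assumes "q_automatic q w" and "q \<ge> 2"
    and lim: "(\<lambda>k. real (count_list (pref w (q ^ k)) \<alpha>) / real (q ^ k)) \<longlonglongrightarrow> \<theta>"
  shows "\<theta> \<in> \<rat>"
proof -
  obtain n and r :: "nat \<Rightarrow> rat" where nontrivial: "\<exists>i<n. r i \<noteq> 0"
    and recurrence: "\<And>k. (\<Sum>i<n. r i * of_nat (count_list (pref w (q ^ (k + i))) \<alpha>)) = 0"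
    using automatic_count_linear_recurrence[OF assms(1)] by blast
  define s where "s k = real (count_list (pref w (q ^ k)) \<alpha>) / real (q ^ k)" for k
  have s_recurrence: "(\<Sum>i<n. of_rat (r i * of_nat (q ^ i)) * s (k + i)) = 0" for k
  proof -
    have "(\<Sum>i<n. of_rat (r i * of_nat (q ^ i)) * s (k + i))
        = (\<Sum>i<n. of_rat (r i * of_nat (count_list (pref w (q ^ (k + i))) \<alpha>))) / real q ^ k"
      unfolding sum_divide_distrib
      by (intro sum.cong refl)
        (use \<open>q \<ge> 2\<close> in \<open>simp add: s_def of_rat_mult of_rat_power power_add field_simps\<close>)
    also have "\<dots> = of_rat (\<Sum>i<n. r i * of_nat (count_list (pref w (q ^ (k + i))) \<alpha>)) / real q ^ k"
      by (simp only: of_rat_sum)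
    also have "\<dots> = 0"
      using recurrence by simp
    finally show ?thesis .
  qed
  have "s = (\<lambda>k. real (count_list (pref w (q ^ k)) \<alpha>) / real (q ^ k))"
    by (simp add: fun_eq_iff s_def)
  with lim have s_lim: "s \<longlonglongrightarrow> \<theta>" by (simp only:)
  have nontrivial': "\<exists>i<n. r i * of_nat (q ^ i) \<noteq> 0"
    using nontrivial \<open>q \<ge> 2\<close> by auto
  have s_rat: "s k \<in> \<rat>" for k
    unfolding s_def by (intro Rats_divide) simp_all
  show ?thesis
    by (rule rational_limit_if_linear_recurrence[OF s_rat s_lim nontrivial' s_recurrence])
qed

lemma (in primitive_morphism) fixed_point_not_automatic:
  assumes fp: "is_fixed_point \<sigma> w" and in_S: "\<And>i. w i \<in> S" and "\<alpha> \<in> S"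
    and left_eigenvector: "\<And>f. (\<Sum>t\<in>S. \<mu> t * (\<Sum>g\<leftarrow>\<sigma> t. f g)) = \<beta> * (\<Sum>t\<in>S. \<mu> t * f t)"
    and irrational: "\<mu> \<alpha> / (\<Sum>t\<in>S. \<mu> t) \<notin> \<rat>" and "q \<ge> 2"
  shows "\<not> q_automatic q w"
proof
  assume automatic: "q_automatic q w"
  obtain \<theta> where lim: "\<And>t. t \<in> S \<Longrightarrow> (\<lambda>k. freq \<alpha> k t) \<longlonglongrightarrow> \<theta>"
    using freq_tendsto[of \<alpha>] by blast
  have "strict_mono (\<lambda>k. q ^ k)"
    using \<open>q \<ge> 2\<close> by (intro strict_monoI power_strict_increasing) auto
  from LIMSEQ_subseq_LIMSEQ[OF fixed_point_freq_tendsto[OF fp in_S lim] this]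
  have "(\<lambda>k. real (count_list (pref w (q ^ k)) \<alpha>) / real (q ^ k)) \<longlonglongrightarrow> \<theta>"
    by (simp add: comp_def)
  then have "\<theta> \<in> \<rat>"
    by (rule automatic_freq_rational[OF automatic \<open>q \<ge> 2\<close>])
  have limit: "\<theta> * (\<Sum>t\<in>S. \<mu> t) = \<mu> \<alpha>"
    by (rule freq_limit_left_eigenvector[OF left_eigenvector \<open>\<alpha> \<in> S\<close> lim])
  have "\<mu> \<alpha> / (\<Sum>t\<in>S. \<mu> t) \<in> \<rat>"
  proof (cases "(\<Sum>t\<in>S. \<mu> t) = 0")
    case False
    then have "\<mu> \<alpha> / (\<Sum>t\<in>S. \<mu> t) = \<theta>"
      by (simp flip: limit)
    with \<open>\<theta> \<in> \<rat>\<close> show ?thesis by simp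
  qed simp
  with irrational show False by contradiction
qed

section \<open>Irrationality criteria\<close>

lemma rational_root_of_monic_int_poly_Ints:
  fixes l :: real and c :: "nat \<Rightarrow> int"
  assumes "l \<in> \<rat>" and root: "l ^ n = (\<Sum>i<n. of_int (c i) * l ^ i)"
  shows "l \<in> \<int>"
proof -
  obtain p q :: int where q: "q > 0" and "coprime p q" and l: "l = of_int p / of_int q"
    using Rats_cases'[OF assms(1)] by metis
  have "of_int (p ^ n) = (of_int q ^ n * l ^ n :: real)"
    using q by (simp add: l power_divide)
  also have "\<dots> = (\<Sum>i<n. of_int (c i) * (of_int q ^ (n - i) * (of_int q ^ i * l ^ i)))"
    by (simp add: root sum_distrib_left mult_ac flip: power_add)
  also have "\<dots> = of_int (\<Sum>i<n. c i * q ^ (n - i) * p ^ i)"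
    using q by (simp add: l power_divide mult.assoc)
  finally have "p ^ n = (\<Sum>i<n. c i * q ^ (n - i) * p ^ i)"
    by (simp only: of_int_eq_iff)
  moreover have "q dvd (\<Sum>i<n. c i * q ^ (n - i) * p ^ i)"
    by (intro dvd_sum) (simp add: dvd_power dvd_mult dvd_mult2)
  ultimately have "q dvd p ^ n" by simp
  moreover have "coprime (p ^ n) q" using \<open>coprime p q\<close> by simp
  ultimately have "is_unit q" by (metis coprime_common_divisor dvd_refl)
  with q l show ?thesis by simp
qed

lemma irrational_if_monic_int_root_between:
  fixes l :: real and c :: "nat \<Rightarrow> int"
  assumes "l ^ n = (\<Sum>i<n. of_int (c i) * l ^ i)" and "of_int k < l" "l < of_int k + 1"
  shows "l \<notin> \<rat>"
proof
  assume "l \<in> \<rat>"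
  then obtain j where "l = of_int j"
    using rational_root_of_monic_int_poly_Ints[OF _ assms(1)] Ints_cases by metis
  with assms(2,3) show False by simp
qed

lemma irrational_linear_relation:
  fixes l u v :: real
  assumes "l \<notin> \<rat>" "u \<in> \<rat>" "v \<in> \<rat>" "u * l = v"
  shows "u = 0 \<and> v = 0"
proof (cases "u = 0")
  case False
  then have "l = v / u" using assms(4) by (simp add: field_simps)
  with assms(1-3) show ?thesis by simp
qed (use assms(4) in simp)

section \<open>The four examples\<close>

lemma real_root_between:
  fixes f :: "real \<Rightarrow> real"
  assumes "lo \<le> hi" "continuous_on {lo..hi} f" "f lo < 0" "0 < f hi"
  obtains l where "lo < l" "l < hi" "f l = 0"
proof -
  obtain l where "lo \<le> l" "l \<le> hi" "f l = 0"
    using IVT'[of f lo 0 hi] assms by force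
  with assms(3,4) that show thesis by force
qed

text \<open>In each example \<open>l\<close> is the Perron eigenvalue, \<open>h\<close> and \<open>\<mu>\<close> are right and left
  eigenvectors for it, and the frequency shown to be irrational is \<open>\<mu>(c) / \<Sum>\<mu>\<close>
  (resp. \<open>\<mu>(z) / \<Sum>\<mu>\<close>).\<close>

lemma \<sigma>1_freq_irrational:
  fixes l :: real
  assumes root: "l ^ 4 = 2 * l ^ 3 + 2 * l\<^sup>2 + l - 2" and "2 < l" "l < 3"
  shows "l / (l\<^sup>2 + l + 1) \<notin> \<rat>"
proof
  assume ratio: "l / (l\<^sup>2 + l + 1) \<in> \<rat>"
  have "l \<notin> \<rat>"
    using assms by (intro irrational_if_monic_int_root_between[where n = 4 and c = "(!) [-2, 1, 2, 2]" and k = 2])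
      (simp_all add: numeral_eq_Suc algebra_simps)
  define s where "s = (l\<^sup>2 + l + 1) / l - 1"
  have "s \<in> \<rat>"
    unfolding s_def by (intro Rats_diff Rats_1) (use Rats_inverse[OF ratio] in simp)
  have quadratic: "l\<^sup>2 = s * l - 1" using \<open>2 < l\<close> by (simp add: s_def field_simps power2_eq_square)
  have relation: "(s ^ 3 - 2 * s\<^sup>2 - 4 * s + 1) * l = s\<^sup>2 - 2 * s - 5"
    using root quadratic by algebra
  have "s ^ 3 - 2 * s\<^sup>2 - 4 * s + 1 = 0" "s\<^sup>2 - 2 * s - 5 = 0"
    using irrational_linear_relation[OF \<open>l \<notin> \<rat>\<close> _ _ relation] \<open>s \<in> \<rat>\<close> by simp_all
  then show False by algebra
qed

lemma \<sigma>2_freq_irrational: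
  fixes l :: real
  assumes root: "l ^ 3 = l\<^sup>2 + 2 * l + 4" and "2 < l" "l < 3"
  shows "2 / (l\<^sup>2 + l + 2) \<notin> \<rat>"
proof
  assume ratio: "2 / (l\<^sup>2 + l + 2) \<in> \<rat>"
  have "l \<notin> \<rat>"
    using assms by (intro irrational_if_monic_int_root_between[where n = 3 and c = "(!) [4, 2, 1]" and k = 2])
      (simp_all add: numeral_eq_Suc algebra_simps)
  define p where "p = (l\<^sup>2 + l + 2) / 2"
  have "p \<in> \<rat>"
    unfolding p_def using Rats_inverse[OF ratio] by simp
  have quadratic: "l\<^sup>2 = 2 * p - 2 - l" by (simp add: p_def field_simps)
  have relation: "(2 * p - 2) * l = 4 * p"
    using root quadratic by algebra
  have "2 * p - 2 = 0" "4 * p = 0"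
    using irrational_linear_relation[OF \<open>l \<notin> \<rat>\<close> _ _ relation] \<open>p \<in> \<rat>\<close> by auto
  then show False by simp
qed

lemma \<sigma>3_freq_irrational:
  fixes l :: real
  assumes root: "l ^ 3 = l + 2" and "1 < l" "l < 2"
  shows "l / (l\<^sup>2 + l + 2) \<notin> \<rat>"
proof
  assume ratio: "l / (l\<^sup>2 + l + 2) \<in> \<rat>"
  have "l \<notin> \<rat>"
    using assms by (intro irrational_if_monic_int_root_between[where n = 3 and c = "(!) [2, 1, 0]" and k = 1])
      (simp_all add: numeral_eq_Suc algebra_simps)
  define s where "s = (l\<^sup>2 + l + 2) / l - 1"
  have "s \<in> \<rat>"
    unfolding s_def by (intro Rats_diff Rats_1) (use Rats_inverse[OF ratio] in simp)
  have quadratic: "l\<^sup>2 = s * l - 2" using \<open>1 < l\<close> by (simp add: s_def field_simps power2_eq_square)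
  have relation: "(s\<^sup>2 - 3) * l = 2 * s + 2"
    using root quadratic by algebra
  have "s\<^sup>2 - 3 = 0" "2 * s + 2 = 0"
    using irrational_linear_relation[OF \<open>l \<notin> \<rat>\<close> _ _ relation] \<open>s \<in> \<rat>\<close> by simp_all
  then show False by algebra
qed

lemma \<rho>_freq_irrational:
  fixes l :: real
  assumes root: "l ^ 3 = l\<^sup>2 + 2" and "1 < l" "l < 2"
  shows "2 / (l\<^sup>2 + 2 * l + 2) \<notin> \<rat>"
proof
  assume ratio: "2 / (l\<^sup>2 + 2 * l + 2) \<in> \<rat>"
  have "l \<notin> \<rat>"
    using assms by (intro irrational_if_monic_int_root_between[where n = 3 and c = "(!) [2, 0, 1]" and k = 1])
      (simp_all add: numeral_eq_Suc algebra_simps)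
  define p where "p = (l\<^sup>2 + 2 * l + 2) / 2"
  have "p \<in> \<rat>"
    unfolding p_def using Rats_inverse[OF ratio] by simp
  have quadratic: "l\<^sup>2 = 2 * p - 2 - 2 * l" by (simp add: p_def field_simps)
  have relation: "(2 * p + 4) * l = 6 * p - 4"
    using root quadratic by algebra
  have "2 * p + 4 = 0" "6 * p - 4 = 0"
    using irrational_linear_relation[OF \<open>l \<notin> \<rat>\<close> _ _ relation] \<open>p \<in> \<rat>\<close> by auto
  then show False by simp
qed

lemma fixed_point_\<sigma>1_not_automatic:
  assumes "is_fixed_point \<sigma>1 w" and "q \<ge> 2"
  shows "\<not> q_automatic q w"
proof -
  obtain l :: real where "2 < l" "l < 3" and "l ^ 4 - 2 * l ^ 3 - 2 * l\<^sup>2 - l + 2 = 0"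
    by (rule real_root_between[of 2 3 "\<lambda>l. l ^ 4 - 2 * l ^ 3 - 2 * l\<^sup>2 - l + 2"])
      (auto intro!: continuous_intros)
  then have root: "l ^ 4 = 2 * l ^ 3 + 2 * l\<^sup>2 + l - 2" by simp
  have "1 < l ^ 3" using \<open>2 < l\<close> by (simp add: one_less_power)
  define h where "h t = (case t of a \<Rightarrow> l ^ 3 - 1 | b \<Rightarrow> 2 | c \<Rightarrow> 2 * l\<^sup>2 | d \<Rightarrow> 2 * l)" for t
  define \<mu> where "\<mu> t = (case t of a \<Rightarrow> l ^ 3 - 1 | b \<Rightarrow> l | c \<Rightarrow> l\<^sup>2 | d \<Rightarrow> 1)" for t
  interpret primitive_morphism \<sigma>1 "{a, b, c, d}" h l 6
  proof
    fix t assume t: "t \<in> {a, b, c, d}"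
    then show "\<sigma>1 t \<noteq> [] \<and> set (\<sigma>1 t) \<subseteq> {a, b, c, d}" by auto
    show "h t > 0" using t \<open>2 < l\<close> \<open>1 < l ^ 3\<close> by (auto simp: h_def)
    show "(\<Sum>g\<leftarrow>\<sigma>1 t. h g) = l * h t"
      using t root by (auto simp: h_def algebra_simps power2_eq_square power3_eq_cube power4_eq_xxxx)
    fix g assume "g \<in> {a, b, c, d}"
    with t show "g \<in> set (morph_pow \<sigma>1 6 t)" by (auto simp: numeral_eq_Suc)
  qed simp_all
  show ?thesis
  proof (rule fixed_point_not_automatic[OF assms(1) _ _ _ _ assms(2)])
    show "w i \<in> {a, b, c, d}" for i by (cases "w i") auto
    show "c \<in> {a, b, c, d}" by simp
    show "(\<Sum>t\<in>{a, b, c, d}. \<mu> t * (\<Sum>g\<leftarrow>\<sigma>1 t. f g)) = l * (\<Sum>t\<in>{a, b, c, d}. \<mu> t * f t)" for f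
      by (simp add: \<mu>_def) (use root in algebra)
    have "(\<Sum>t\<in>{a, b, c, d}. \<mu> t) = l * (l\<^sup>2 + l + 1)"
      by (simp add: \<mu>_def algebra_simps power2_eq_square power3_eq_cube)
    then have "\<mu> c / (\<Sum>t\<in>{a, b, c, d}. \<mu> t) = l / (l\<^sup>2 + l + 1)"
      using \<open>2 < l\<close> by (simp add: \<mu>_def power2_eq_square nonzero_mult_divide_mult_cancel_left)
    then show "\<mu> c / (\<Sum>t\<in>{a, b, c, d}. \<mu> t) \<notin> \<rat>"
      using \<sigma>1_freq_irrational[OF root \<open>2 < l\<close> \<open>l < 3\<close>] by simp
  qed
qed

lemma fixed_point_\<sigma>2_not_automatic:
  assumes "is_fixed_point \<sigma>2 w" and "q \<ge> 2"
  shows "\<not> q_automatic q w"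
proof -
  obtain l :: real where "2 < l" "l < 3" and "l ^ 3 - l\<^sup>2 - 2 * l - 4 = 0"
    by (rule real_root_between[of 2 3 "\<lambda>l. l ^ 3 - l\<^sup>2 - 2 * l - 4"])
      (auto intro!: continuous_intros)
  then have root: "l ^ 3 = l\<^sup>2 + 2 * l + 4" by simp
  define h where "h t = (case t of x \<Rightarrow> l\<^sup>2 | y \<Rightarrow> 2 * l | z \<Rightarrow> 4)" for t
  define \<mu> where "\<mu> t = (case t of x \<Rightarrow> 2 * l | y \<Rightarrow> l\<^sup>2 - l | z \<Rightarrow> 2)" for t
  interpret primitive_morphism \<sigma>2 "{x, y, z}" h l 3
  proof
    fix t assume t: "t \<in> {x, y, z}"
    then show "\<sigma>2 t \<noteq> [] \<and> set (\<sigma>2 t) \<subseteq> {x, y, z}" by auto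
    show "h t > 0" using t \<open>2 < l\<close> by (auto simp: h_def)
    show "(\<Sum>g\<leftarrow>\<sigma>2 t. h g) = l * h t"
      using t root by (auto simp: h_def algebra_simps power2_eq_square power3_eq_cube)
    fix g assume "g \<in> {x, y, z}"
    with t show "g \<in> set (morph_pow \<sigma>2 3 t)" by (auto simp: numeral_3_eq_3)
  qed simp_all
  show ?thesis
  proof (rule fixed_point_not_automatic[OF assms(1) _ _ _ _ assms(2)])
    show "w i \<in> {x, y, z}" for i by (cases "w i") auto
    show "z \<in> {x, y, z}" by simp
    show "(\<Sum>t\<in>{x, y, z}. \<mu> t * (\<Sum>g\<leftarrow>\<sigma>2 t. f g)) = l * (\<Sum>t\<in>{x, y, z}. \<mu> t * f t)" for f
      by (simp add: \<mu>_def) (use root in algebra)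
    have "\<mu> z / (\<Sum>t\<in>{x, y, z}. \<mu> t) = 2 / (l\<^sup>2 + l + 2)"
      by (simp add: \<mu>_def algebra_simps)
    then show "\<mu> z / (\<Sum>t\<in>{x, y, z}. \<mu> t) \<notin> \<rat>"
      using \<sigma>2_freq_irrational[OF root \<open>2 < l\<close> \<open>l < 3\<close>] by simp
  qed
qed

lemma fixed_point_\<sigma>3_cube_not_automatic:
  assumes "is_fixed_point (morph_pow \<sigma>3 3) w" and "w 0 \<in> {a, b, c}" and "q \<ge> 2"
  shows "\<not> q_automatic q w"
proof -
  obtain l :: real where "1 < l" "l < 2" and "l ^ 3 - l - 2 = 0"
    by (rule real_root_between[of 1 2 "\<lambda>l. l ^ 3 - l - 2"]) (auto intro!: continuous_intros)
  then have root: "l ^ 3 = l + 2" by simp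
  define h where "h t = (case t of a \<Rightarrow> 1 | b \<Rightarrow> l | c \<Rightarrow> l\<^sup>2 | d \<Rightarrow> 0)" for t
  define \<mu> where "\<mu> t = (case t of a \<Rightarrow> 2 | b \<Rightarrow> l\<^sup>2 | c \<Rightarrow> l | d \<Rightarrow> 0)" for t
  interpret primitive_morphism "morph_pow \<sigma>3 3" "{a, b, c}" h "l + 2" 2
  proof
    fix t assume t: "t \<in> {a, b, c}"
    then show "morph_pow \<sigma>3 3 t \<noteq> [] \<and> set (morph_pow \<sigma>3 3 t) \<subseteq> {a, b, c}"
      by (auto simp: numeral_3_eq_3)
    show "h t > 0" using t \<open>1 < l\<close> by (auto simp: h_def)
    show "(\<Sum>g\<leftarrow>morph_pow \<sigma>3 3 t. h g) = (l + 2) * h t"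
      using t root by (auto simp: h_def numeral_3_eq_3 algebra_simps power2_eq_square power3_eq_cube)
    fix g assume "g \<in> {a, b, c}"
    with t show "g \<in> set (morph_pow (morph_pow \<sigma>3 3) 2 t)" by (auto simp: numeral_3_eq_3 numeral_2_eq_2)
  qed simp_all
  show ?thesis
  proof (rule fixed_point_not_automatic[OF assms(1) _ _ _ _ assms(3)])
    show "w i \<in> {a, b, c}" for i
      by (rule fixed_point_in_alphabet[OF assms(1,2)]) (auto simp: numeral_3_eq_3)
    show "c \<in> {a, b, c}" by simp
    show "(\<Sum>t\<in>{a, b, c}. \<mu> t * (\<Sum>g\<leftarrow>morph_pow \<sigma>3 3 t. f g)) = (l + 2) * (\<Sum>t\<in>{a, b, c}. \<mu> t * f t)"
      for f by (simp add: \<mu>_def numeral_3_eq_3) (use root in algebra)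
    have "\<mu> c / (\<Sum>t\<in>{a, b, c}. \<mu> t) = l / (l\<^sup>2 + l + 2)"
      by (simp add: \<mu>_def algebra_simps)
    then show "\<mu> c / (\<Sum>t\<in>{a, b, c}. \<mu> t) \<notin> \<rat>"
      using \<sigma>3_freq_irrational[OF root \<open>1 < l\<close> \<open>l < 2\<close>] by simp
  qed
qed

lemma fixed_point_\<rho>_cube_not_automatic:
  assumes "is_fixed_point (morph_pow \<rho> 3) w" and "w 0 \<in> {a, b, c}" and "q \<ge> 2"
  shows "\<not> q_automatic q w"
proof -
  obtain l :: real where "1 < l" "l < 2" and "l ^ 3 - l\<^sup>2 - 2 = 0"
    by (rule real_root_between[of 1 2 "\<lambda>l. l ^ 3 - l\<^sup>2 - 2"]) (auto intro!: continuous_intros)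
  then have root: "l ^ 3 = l\<^sup>2 + 2" by simp
  define h where "h t = (case t of a \<Rightarrow> 1 | b \<Rightarrow> l\<^sup>2 | c \<Rightarrow> l | d \<Rightarrow> 0)" for t
  define \<mu> where "\<mu> t = (case t of a \<Rightarrow> 2 * l | b \<Rightarrow> l\<^sup>2 | c \<Rightarrow> 2 | d \<Rightarrow> 0)" for t
  interpret primitive_morphism "morph_pow \<rho> 3" "{a, b, c}" h "l\<^sup>2 + 2" 2
  proof
    fix t assume t: "t \<in> {a, b, c}"
    then show "morph_pow \<rho> 3 t \<noteq> [] \<and> set (morph_pow \<rho> 3 t) \<subseteq> {a, b, c}"
      by (auto simp: numeral_3_eq_3)
    show "h t > 0" using t \<open>1 < l\<close> by (auto simp: h_def)
    show "(\<Sum>g\<leftarrow>morph_pow \<rho> 3 t. h g) = (l\<^sup>2 + 2) * h t"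
      using t root by (auto simp: h_def numeral_3_eq_3 algebra_simps power2_eq_square power3_eq_cube)
    fix g assume "g \<in> {a, b, c}"
    with t show "g \<in> set (morph_pow (morph_pow \<rho> 3) 2 t)" by (auto simp: numeral_3_eq_3 numeral_2_eq_2)
  qed simp_all
  show ?thesis
  proof (rule fixed_point_not_automatic[OF assms(1) _ _ _ _ assms(3)])
    show "w i \<in> {a, b, c}" for i
      by (rule fixed_point_in_alphabet[OF assms(1,2)]) (auto simp: numeral_3_eq_3)
    show "c \<in> {a, b, c}" by simp
    show "(\<Sum>t\<in>{a, b, c}. \<mu> t * (\<Sum>g\<leftarrow>morph_pow \<rho> 3 t. f g)) = (l\<^sup>2 + 2) * (\<Sum>t\<in>{a, b, c}. \<mu> t * f t)"
      for f by (simp add: \<mu>_def numeral_3_eq_3) (use root in algebra)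
    have "\<mu> c / (\<Sum>t\<in>{a, b, c}. \<mu> t) = 2 / (l\<^sup>2 + 2 * l + 2)"
      by (simp add: \<mu>_def algebra_simps)
    then show "\<mu> c / (\<Sum>t\<in>{a, b, c}. \<mu> t) \<notin> \<rat>"
      using \<rho>_freq_irrational[OF root \<open>1 < l\<close> \<open>l < 2\<close>] by simp
  qed
qed

theorem mainTheorem11:
  shows "(\<forall>w q. is_fixed_point \<sigma>1 w \<and> w 0 = a \<and> q \<ge> 2 \<longrightarrow> \<not> q_automatic q w)
       \<and> (\<forall>w q. is_fixed_point \<sigma>2 w \<and> w 0 = x \<and> q \<ge> 2 \<longrightarrow> \<not> q_automatic q w)
       \<and> (\<forall>w q. is_fixed_point (morph_pow \<sigma>3 3) w \<and> w 0 \<in> {a, b} \<and> q \<ge> 2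
              \<longrightarrow> \<not> q_automatic q w)
       \<and> (\<forall>w q. is_fixed_point (morph_pow \<rho> 3) w \<and> w 0 \<in> {a, b, c} \<and> q \<ge> 2
              \<longrightarrow> \<not> q_automatic q w)"
proof (intro conjI allI impI)
  fix w :: "nat \<Rightarrow> L4" and q :: nat
  show "\<not> q_automatic q w" if "is_fixed_point \<sigma>1 w \<and> w 0 = a \<and> q \<ge> 2"
    using that fixed_point_\<sigma>1_not_automatic by blast
  show "\<not> q_automatic q w" if "is_fixed_point (morph_pow \<sigma>3 3) w \<and> w 0 \<in> {a, b} \<and> q \<ge> 2"
    using that fixed_point_\<sigma>3_cube_not_automatic by blast
  show "\<not> q_automatic q w" if "is_fixed_point (morph_pow \<rho> 3) w \<and> w 0 \<in> {a, b, c} \<and> q \<ge> 2"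
    using that fixed_point_\<rho>_cube_not_automatic by blast
next
  fix w :: "nat \<Rightarrow> L3" and q :: nat
  show "\<not> q_automatic q w" if "is_fixed_point \<sigma>2 w \<and> w 0 = x \<and> q \<ge> 2"
    using that fixed_point_\<sigma>2_not_automatic by blast
qed

end
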